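(* Let $p,r$ be positive integers and $q=p+r$. Then the map $\Phi:U_{pq}(\mathbb{H})\to\mathbb{H}^{r\times p}$, $\Phi(Q)=Q_2(Q_0-Q_1)^{-1}$, is a $\mathbf{GL}_p(\mathbb{H})$-invariant harmonic map on $U_{pq}(\mathbb{H})$, equipped with the semi-Euclidean metric (and $\mathbb{H}^{r\times p}$ with its flat metric).
   Context: Elements of $\mathbb{H}^{(p+q)\times p}$ are written $Q=(Q_0;Q_1;Q_2)$ with $Q_0,Q_1\in\mathbb{H}^{p\times p}$, $Q_2\in\mathbb{H}^{r\times p}$. $U_{pq}(\mathbb{H})=\{Q: -Q_0^*Q_0+Q_1^*Q_1+Q_2^*Q_2<0\}$, meaning $x^*(\cdot)x<0$ for every non-zero $x\in\mathbb{H}^p$; on it $Q_0-Q_1$ is invertible. $\mathbf{GL}_p(\mathbb{H})$ acts by right multiplication. The semi-Euclidean metric is $(X,Y)=\mathfrak{Re}\,\mathrm{trace}(X^*\mathrm{diag}(-I_p,I_q)Y)$. Harmonic means vanishing tension field, i.e. every real component of $\Phi$ is annihilated by the Laplace–Beltrami operator of the semi-Euclidean metric. *)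

theory Defs
  imports "HOL-Analysis.Analysis"
begin

section \<open>Quaternions as real 4-vectors (components 1,2,3,4 = real, i, j, k parts)\<close>

type_synonym quat = "real^4"

definition qmult :: "quat \<Rightarrow> quat \<Rightarrow> quat" where
  "qmult a b = vector
     [a$1*b$1 - a$2*b$2 - a$3*b$3 - a$4*b$4,
      a$1*b$2 + a$2*b$1 + a$3*b$4 - a$4*b$3,
      a$1*b$3 - a$2*b$4 + a$3*b$1 + a$4*b$2,
      a$1*b$4 + a$2*b$3 - a$3*b$2 + a$4*b$1]"

definition qconj :: "quat \<Rightarrow> quat" where
  "qconj a = vector [a$1, - a$2, - a$3, - a$4]"

definition qone :: quat where
  "qone = vector [1, 0, 0, 0]"

section \<open>Quaternionic matrices: A :: quat^'n^'m is an m x n matrix, entry A$i$j\<close>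

definition qmat_mul :: "quat^'n^'m \<Rightarrow> quat^'k^'n \<Rightarrow> quat^'k^'m" where
  "qmat_mul A B = (\<chi> i k. \<Sum>j\<in>UNIV. qmult (A$i$j) (B$j$k))"

definition qmat_id :: "quat^'n^'n" where
  "qmat_id = (\<chi> i j. if i = j then qone else 0)"

definition qadj :: "quat^'n^'m \<Rightarrow> quat^'m^'n" where
  "qadj A = (\<chi> i j. qconj (A$j$i))"

definition qinvertible :: "quat^'n^'n \<Rightarrow> bool" where
  "qinvertible A \<longleftrightarrow> (\<exists>B. qmat_mul A B = qmat_id \<and> qmat_mul B A = qmat_id)"

definition qinv :: "quat^'n^'n \<Rightarrow> quat^'n^'n" where
  "qinv A = (SOME B. qmat_mul A B = qmat_id \<and> qmat_mul B A = qmat_id)"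

definition qmat_vec :: "quat^'n^'m \<Rightarrow> quat^'n \<Rightarrow> quat^'m" where
  "qmat_vec A x = (\<chi> i. \<Sum>j\<in>UNIV. qmult (A$i$j) (x$j))"

definition qform :: "quat^'n \<Rightarrow> quat^'n^'n \<Rightarrow> quat" where
  "qform x M = (\<Sum>i\<in>UNIV. qmult (qconj (x$i)) (qmat_vec M x $ i))"

text \<open>Elements Q = (Q0;Q1;Q2) of H^((p+q) x p), q = p + r, are triples.\<close>
type_synonym ('p,'r) qblock = "(quat^'p^'p) \<times> (quat^'p^'p) \<times> (quat^'p^'r)"

definition Upq :: "('p::finite,'r::finite) qblock set" where
  "Upq = {(Q0,Q1,Q2). \<forall>x::quat^'p. x \<noteq> 0 \<longrightarrow>
      (let h = qform x (- qmat_mul (qadj Q0) Q0 + qmat_mul (qadj Q1) Q1 + qmat_mul (qadj Q2) Q2)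
       in h$2 = 0 \<and> h$3 = 0 \<and> h$4 = 0 \<and> h$1 < 0)}"

definition gact :: "('p::finite,'r::finite) qblock \<Rightarrow> quat^'p^'p \<Rightarrow> ('p,'r) qblock" where
  "gact Q g = (case Q of (Q0,Q1,Q2) \<Rightarrow> (qmat_mul Q0 g, qmat_mul Q1 g, qmat_mul Q2 g))"

definition Phi :: "('p::finite,'r::finite) qblock \<Rightarrow> quat^'p^'r" where
  "Phi Q = (case Q of (Q0,Q1,Q2) \<Rightarrow> qmat_mul Q2 (qinv (Q0 - Q1)))"

text \<open>For a constant metric that is diagonal with entries s b = +-1 in the orthonormal
  basis Basis, the Laplace-Beltrami operator is sum_b s b * d^2/db^2. A map into the flat
  space 'b is harmonic iff it is twice differentiable and this operator kills it
  (componentwise, i.e. as a vector).\<close>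
definition semi_harmonic_on ::
  "('a::euclidean_space \<Rightarrow> real) \<Rightarrow> 'a set \<Rightarrow> ('a \<Rightarrow> 'b::real_normed_vector) \<Rightarrow> bool" where
  "semi_harmonic_on s U f \<longleftrightarrow>
    (\<exists>(D1 :: 'a \<Rightarrow> ('a \<Rightarrow>\<^sub>L 'b)) (D2 :: 'a \<Rightarrow> 'a \<Rightarrow> ('a \<Rightarrow>\<^sub>L 'b)).
      \<forall>x\<in>U. (f has_derivative blinfun_apply (D1 x)) (at x)
          \<and> (D1 has_derivative D2 x) (at x)
          \<and> (\<Sum>b\<in>Basis. s b *\<^sub>R blinfun_apply (D2 x b) b) = 0)"

text \<open>Signature of the metric Re trace(X^* diag(-I_p, I_q) Y) on basis vectors:
  -1 on the Q0 block, +1 on the Q1 and Q2 blocks.\<close>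
definition usig :: "('p::finite,'r::finite) qblock \<Rightarrow> real" where
  "usig v = (if fst v \<noteq> 0 then -1 else 1)"

end

theory Submission
  imports Defs
begin

text \<open>Right multiplication by g \<in> GL_p multiplies both Q_2 and Q_0 - Q_1 on the right by g, and
  this cancels in Q_2 (Q_0 - Q_1)^{-1}. The map \<Phi> depends on Q_0 and Q_1 only through
  Q_0 - Q_1, so its second derivative along a direction in the Q_0 block equals the one along the
  same direction in the Q_1 block, and it is linear in Q_2. Since the metric has sign -1 on the
  Q_0 block and +1 on the others, the Laplacian cancels in pairs. Membership in U_pq is only
  needed for the invertibility of Q_0 - Q_1: on its kernel the defining form reduces to
  |Q_2 x|^2 \<ge> 0.\<close>

notation qmat_mul (infixl "\<star>" 70)

lemma qmult_nth:
  "qmult a b $ 1 = a$1*b$1 - a$2*b$2 - a$3*b$3 - a$4*b$4"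
  "qmult a b $ 2 = a$1*b$2 + a$2*b$1 + a$3*b$4 - a$4*b$3"
  "qmult a b $ 3 = a$1*b$3 - a$2*b$4 + a$3*b$1 + a$4*b$2"
  "qmult a b $ 4 = a$1*b$4 + a$2*b$3 - a$3*b$2 + a$4*b$1"
  by (simp_all add: qmult_def vector_def)

lemma qconj_nth:
  "qconj a $ 1 = a$1" "qconj a $ 2 = - a$2" "qconj a $ 3 = - a$3" "qconj a $ 4 = - a$4"
  by (simp_all add: qconj_def vector_def)

lemma qone_nth: "qone $ 1 = 1" "qone $ 2 = 0" "qone $ 3 = 0" "qone $ 4 = 0"
  by (simp_all add: qone_def vector_def)

lemma quat_eq_iff: "(a::quat) = b \<longleftrightarrow> a$1 = b$1 \<and> a$2 = b$2 \<and> a$3 = b$3 \<and> a$4 = b$4"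
  by (simp add: vec_eq_iff forall_4)

lemmas quat_simps = quat_eq_iff qmult_nth qconj_nth qone_nth

lemma bounded_bilinear_qmult: "bounded_bilinear qmult"
  unfolding bilinear_conv_bounded_bilinear[symmetric] bilinear_def
  by (auto intro!: linearI simp: quat_simps algebra_simps)

interpretation qmult: bounded_bilinear qmult
  by (rule bounded_bilinear_qmult)

lemma qmult_assoc: "qmult (qmult a b) c = qmult a (qmult b c)"
  by (simp add: quat_simps algebra_simps)

lemma qmult_qone_left [simp]: "qmult qone a = a"
  by (simp add: quat_simps)

lemma qmult_qone_right [simp]: "qmult a qone = a"
  by (simp add: quat_simps)

lemma qconj_qmult: "qconj (qmult a b) = qmult (qconj b) (qconj a)"
  by (simp add: quat_simps algebra_simps)

lemma linear_qconj: "linear qconj"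
  by (auto intro!: linearI simp: quat_simps)

lemma qmult_qconj_self_re: "qmult (qconj a) a $ 1 = (norm a)\<^sup>2"
  by (simp add: qmult_nth qconj_nth norm_vec_def L2_set_def sum_4 power2_eq_square)

lemma qmat_mul_nth: "(A \<star> B) $ i $ k = (\<Sum>j\<in>UNIV. qmult (A$i$j) (B$j$k))"
  by (simp add: qmat_mul_def)

lemma qmat_vec_nth: "qmat_vec A x $ i = (\<Sum>j\<in>UNIV. qmult (A$i$j) (x$j))"
  by (simp add: qmat_vec_def)

lemma bounded_bilinear_qmat_mul:
  "bounded_bilinear (qmat_mul :: quat^'n::finite^'m::finite \<Rightarrow> quat^'k::finite^'n \<Rightarrow> quat^'k^'m)"
  unfolding bilinear_conv_bounded_bilinear[symmetric] bilinear_def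
  by (auto intro!: linearI simp: vec_eq_iff qmat_mul_nth qmult.add_left qmult.add_right
      qmult.scaleR_left qmult.scaleR_right sum.distrib scaleR_sum_right)

interpretation qmat_mul:
  bounded_bilinear "qmat_mul :: quat^'n::finite^'m::finite \<Rightarrow> quat^'k::finite^'n \<Rightarrow> quat^'k^'m"
  by (rule bounded_bilinear_qmat_mul)

lemma bounded_bilinear_qmat_vec:
  "bounded_bilinear (qmat_vec :: quat^'n::finite^'m::finite \<Rightarrow> quat^'n \<Rightarrow> quat^'m)"
  unfolding bilinear_conv_bounded_bilinear[symmetric] bilinear_def
  by (auto intro!: linearI simp: vec_eq_iff qmat_vec_nth qmult.add_left qmult.add_right
      qmult.scaleR_left qmult.scaleR_right sum.distrib scaleR_sum_right)

interpretation qmat_vec: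
  bounded_bilinear "qmat_vec :: quat^'n::finite^'m::finite \<Rightarrow> quat^'n \<Rightarrow> quat^'m"
  by (rule bounded_bilinear_qmat_vec)

lemma qmat_mul_assoc: "A \<star> B \<star> C = A \<star> (B \<star> C)"
proof -
  have "(\<Sum>j\<in>UNIV. qmult (\<Sum>l\<in>UNIV. qmult (A$i$l) (B$l$j)) (C$j$k))
      = (\<Sum>l\<in>UNIV. qmult (A$i$l) (\<Sum>j\<in>UNIV. qmult (B$l$j) (C$j$k)))" for i k
    by (simp add: qmult.sum_left qmult.sum_right qmult_assoc) (rule sum.swap)
  then show ?thesis
    by (simp add: vec_eq_iff qmat_mul_nth)
qed

lemma qmat_vec_qmat_mul: "qmat_vec (A \<star> B) x = qmat_vec A (qmat_vec B x)"
proof -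
  have "(\<Sum>j\<in>UNIV. qmult (\<Sum>l\<in>UNIV. qmult (A$i$l) (B$l$j)) (x$j))
      = (\<Sum>l\<in>UNIV. qmult (A$i$l) (\<Sum>j\<in>UNIV. qmult (B$l$j) (x$j)))" for i
    by (simp add: qmult.sum_left qmult.sum_right qmult_assoc) (rule sum.swap)
  then show ?thesis
    by (simp add: vec_eq_iff qmat_mul_nth qmat_vec_nth)
qed

lemma qmult_qmat_id_entry:
  "qmult (if i = j then qone else 0) a = (if i = j then a else 0)"
  "qmult a (if i = j then qone else 0) = (if i = j then a else 0)"
  by (simp_all add: qmult.zero_left qmult.zero_right)

lemma qmat_mul_id_left [simp]: "qmat_id \<star> A = A"
  by (simp add: qmat_mul_def qmat_id_def qmult_qmat_id_entry)

lemma qmat_mul_id_right [simp]: "A \<star> qmat_id = A"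
  by (simp add: qmat_mul_def qmat_id_def qmult_qmat_id_entry)

lemma qmat_vec_id [simp]: "qmat_vec qmat_id x = x"
  by (simp add: qmat_vec_def qmat_id_def qmult_qmat_id_entry)

lemma qmat_mul_columns: "W \<star> X = (\<chi> i k. qmat_vec W (\<chi> j. X$j$k) $ i)"
  by (simp add: qmat_mul_def qmat_vec_nth)

lemma qmat_right_inverse_if_inj:
  fixes W :: "quat^'n::finite^'n"
  assumes "\<And>x. qmat_vec W x = 0 \<Longrightarrow> x = 0"
  obtains B where "W \<star> B = qmat_id"
proof
  have "inj (qmat_vec W)"
  proof (rule injI)
    fix x y assume "qmat_vec W x = qmat_vec W y"
    then have "qmat_vec W (x - y) = 0"
      by (simp add: qmat_vec.diff_right)
    then show "x = y"
      using assms[of "x - y"] by simp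
  qed
  then have "surj (qmat_vec W)"
    using linear_inj_imp_surj[OF bounded_linear.linear[OF qmat_vec.bounded_linear_right]] by blast
  then show "W \<star> (\<chi> j k. inv (qmat_vec W) (\<chi> i. if i = k then qone else 0) $ j) = qmat_id"
    by (simp add: qmat_mul_columns surj_f_inv_f qmat_id_def)
qed

lemma qinvertible_if_inj:
  fixes W :: "quat^'n::finite^'n"
  assumes "\<And>x. qmat_vec W x = 0 \<Longrightarrow> x = 0"
  shows "qinvertible W"
proof -
  obtain B where WB: "W \<star> B = qmat_id"
    using qmat_right_inverse_if_inj assms by blast
  have "x = 0" if "qmat_vec B x = 0" for x
  proof -
    have "x = qmat_vec (W \<star> B) x"
      by (simp add: WB)
    then show ?thesis
      by (simp add: qmat_vec_qmat_mul that qmat_vec.zero_right)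
  qed
  then obtain C where BC: "B \<star> C = qmat_id"
    using qmat_right_inverse_if_inj by blast
  have "C = W \<star> B \<star> C"
    by (simp add: WB)
  also have "\<dots> = W"
    by (simp add: qmat_mul_assoc BC)
  finally have "C = W" .
  with WB BC show ?thesis
    unfolding qinvertible_def by blast
qed

lemma
  assumes "qinvertible W"
  shows qmat_mul_qinv_right: "W \<star> qinv W = qmat_id"
    and qmat_mul_qinv_left: "qinv W \<star> W = qmat_id"
  using someI_ex[OF assms[unfolded qinvertible_def]] unfolding qinv_def by blast+

lemma qinv_eqI:
  assumes "qinvertible W" and "W \<star> B = qmat_id"
  shows "qinv W = B"
proof -
  have "qinv W = qinv W \<star> (W \<star> B)"
    by (simp add: assms(2))
  also have "\<dots> = B"
    by (simp add: qmat_mul_assoc[symmetric] qmat_mul_qinv_left assms(1))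
  finally show ?thesis .
qed

lemma qinv_qmat_mul:
  assumes "qinvertible A" and "qinvertible g"
  shows "qinv (A \<star> g) = qinv g \<star> qinv A"
proof -
  have "A \<star> g \<star> (qinv g \<star> qinv A) = qmat_id" "qinv g \<star> qinv A \<star> (A \<star> g) = qmat_id"
    by (simp_all add: qmat_mul_assoc, simp_all add: qmat_mul_assoc[symmetric]
        qmat_mul_qinv_left qmat_mul_qinv_right assms)
  then show ?thesis
    using qinv_eqI qinvertible_def by blast
qed

lemma linear_qform: "linear (qform x)"
  by (rule linearI) (simp_all add: qform_def qmat_vec.add_left qmat_vec.scaleR_left
      qmult.add_right qmult.scaleR_right sum.distrib scaleR_sum_right)

lemma qform_qadj_mul_re: "qform x (qadj A \<star> A) $ 1 = (norm (qmat_vec A x))\<^sup>2"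
proof -
  define y where "y = qmat_vec A x"
  have "qform x (qadj A \<star> A)
      = (\<Sum>i\<in>UNIV. qmult (qconj (x$i)) (\<Sum>k\<in>UNIV. qmult (qconj (A$k$i)) (y$k)))"
    by (simp add: qform_def qmat_vec_qmat_mul y_def[symmetric] qmat_vec_nth qadj_def)
  also have "\<dots> = (\<Sum>i\<in>UNIV. \<Sum>k\<in>UNIV. qmult (qconj (qmult (A$k$i) (x$i))) (y$k))"
    by (simp add: qmult.sum_right qconj_qmult qmult_assoc)
  also have "\<dots> = (\<Sum>k\<in>UNIV. \<Sum>i\<in>UNIV. qmult (qconj (qmult (A$k$i) (x$i))) (y$k))"
    by (rule sum.swap)
  also have "\<dots> = (\<Sum>k\<in>UNIV. qmult (qconj (y$k)) (y$k))"
    by (simp add: qmult.sum_left linear_sum[OF linear_qconj] y_def qmat_vec_nth)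
  finally have "qform x (qadj A \<star> A) $ 1 = (\<Sum>k\<in>UNIV. (norm (y$k))\<^sup>2)"
    by (simp add: qmult_qconj_self_re)
  also have "\<dots> = (norm y)\<^sup>2"
    by (simp add: norm_vec_def L2_set_def sum_nonneg)
  finally show ?thesis
    by (simp add: y_def)
qed

lemma qinvertible_diff_if_Upq:
  assumes "(Q0, Q1, Q2) \<in> Upq"
  shows "qinvertible (Q0 - Q1)"
proof (rule qinvertible_if_inj, rule ccontr)
  fix x assume ker: "qmat_vec (Q0 - Q1) x = 0" and "x \<noteq> 0"
  then have "qform x (- (qadj Q0 \<star> Q0) + qadj Q1 \<star> Q1 + qadj Q2 \<star> Q2) $ 1 < 0"
    using assms unfolding Upq_def Let_def by auto
  then have "- (norm (qmat_vec Q0 x))\<^sup>2 + (norm (qmat_vec Q1 x))\<^sup>2 + (norm (qmat_vec Q2 x))\<^sup>2 < 0"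
    by (simp add: linear_add[OF linear_qform] linear_diff[OF linear_qform] qform_qadj_mul_re)
  moreover have "qmat_vec Q0 x = qmat_vec Q1 x"
    using ker by (simp add: qmat_vec.diff_left)
  ultimately show False
    by simp
qed

lemma Phi_gact:
  assumes "Q \<in> Upq" and "qinvertible g"
  shows "Phi (gact Q g) = Phi Q"
proof -
  obtain Q0 Q1 Q2 where Q: "Q = (Q0, Q1, Q2)"
    by (cases Q) auto
  have "qinvertible (Q0 - Q1)"
    using assms(1) Q qinvertible_diff_if_Upq by blast
  moreover have "Phi (gact Q g) = Q2 \<star> g \<star> qinv ((Q0 - Q1) \<star> g)"
    by (simp add: Q gact_def Phi_def qmat_mul.diff_left)
  ultimately have "Phi (gact Q g) = Q2 \<star> g \<star> (qinv g \<star> qinv (Q0 - Q1))"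
    by (simp add: qinv_qmat_mul assms(2))
  also have "\<dots> = Q2 \<star> (g \<star> qinv g) \<star> qinv (Q0 - Q1)"
    by (simp add: qmat_mul_assoc)
  also have "\<dots> = Phi Q"
    by (simp add: Q Phi_def qmat_mul_qinv_right assms(2))
  finally show ?thesis .
qed

lemma qinvertible_bounded_below:
  fixes W :: "quat^'n::finite^'n"
  assumes "qinvertible W"
  obtains C where "C > 0" and "\<And>x. norm x \<le> C * norm (qmat_vec W x)"
proof -
  obtain K where K: "K > 0" "\<And>A x. norm (qmat_vec (A::quat^'n^'n) x) \<le> norm A * norm x * K"
    using qmat_vec.pos_bounded by blast
  show ?thesis
  proof
    show "(norm (qinv W) + 1) * K > 0"
      using K(1) by (simp add: add_nonneg_pos)
    fix x :: "quat^'n"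
    have "norm x = norm (qmat_vec (qinv W) (qmat_vec W x))"
      by (simp add: qmat_vec_qmat_mul[symmetric] qmat_mul_qinv_left assms)
    also have "\<dots> \<le> norm (qinv W) * norm (qmat_vec W x) * K"
      by (rule K(2))
    also have "\<dots> \<le> (norm (qinv W) + 1) * K * norm (qmat_vec W x)"
      using K(1) by (simp add: algebra_simps)
    finally show "norm x \<le> (norm (qinv W) + 1) * K * norm (qmat_vec W x)" .
  qed
qed

lemma open_qinvertible: "open {W::quat^'n::finite^'n. qinvertible W}"
proof (rule openI)
  fix W :: "quat^'n^'n" assume "W \<in> {W. qinvertible W}"
  then obtain C where C: "C > 0" "\<And>x. norm x \<le> C * norm (qmat_vec W x)"
    using qinvertible_bounded_below by blast
  obtain K where K: "K > 0" "\<And>A x. norm (qmat_vec (A::quat^'n^'n) x) \<le> norm A * norm x * K"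
    using qmat_vec.pos_bounded by blast
  have "qinvertible W'" if "W' \<in> ball W (1 / (C * K))" for W'
  proof (rule qinvertible_if_inj, rule ccontr)
    fix x assume "qmat_vec W' x = 0" and "x \<noteq> 0"
    have small: "C * K * norm (W - W') < 1"
      using that C(1) K(1) by (simp add: dist_norm field_simps)
    have "norm x \<le> C * norm (qmat_vec (W - W') x)"
      using C(2)[of x] \<open>qmat_vec W' x = 0\<close> by (simp add: qmat_vec.diff_left)
    also have "\<dots> \<le> C * (norm (W - W') * norm x * K)"
      using C(1) K(2) by (simp add: mult_left_mono)
    also have "\<dots> = (C * K * norm (W - W')) * norm x"
      by (simp add: algebra_simps)
    also have "\<dots> < norm x"
      using small \<open>x \<noteq> 0\<close> by simp
    finally show False
      by simp
  qed
  then show "\<exists>e>0. ball W e \<subseteq> {W. qinvertible W}"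
    using C(1) K(1) by (intro exI[of _ "1 / (C * K)"]) auto
qed

text \<open>The derivative of qinv is read off from the local inverse (W, K) \<mapsto> (W, W^-1 K) of
  F (W, J) = (W, W J), to which the inverse function theorem applies.\<close>
lemma has_derivative_qinv:
  fixes W0 :: "quat^'n::finite^'n"
  assumes W0: "qinvertible W0"
  shows "(qinv has_derivative (\<lambda>h. - (qinv W0 \<star> h \<star> qinv W0))) (at W0)"
proof -
  define J where "J = qinv W0"
  define F :: "(quat^'n^'n) \<times> (quat^'n^'n) \<Rightarrow> (quat^'n^'n) \<times> (quat^'n^'n)"
    where "F = (\<lambda>p. (fst p, fst p \<star> snd p))"
  define G :: "(quat^'n^'n) \<times> (quat^'n^'n) \<Rightarrow> (quat^'n^'n) \<times> (quat^'n^'n)"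
    where "G = (\<lambda>p. (fst p, qinv (fst p) \<star> snd p))"
  define G' :: "(quat^'n^'n) \<times> (quat^'n^'n) \<Rightarrow> (quat^'n^'n) \<times> (quat^'n^'n)"
    where "G' = (\<lambda>h. (fst h, J \<star> (snd h - fst h \<star> J)))"
  have F_deriv: "(F has_derivative (\<lambda>h. (fst h, fst x \<star> snd h + fst h \<star> snd x))) (at x)" for x
    unfolding F_def
    by (intro has_derivative_Pair qmat_mul.FDERIV has_derivative_fst has_derivative_snd
        has_derivative_ident)
  have "((\<lambda>p. snd (G p)) has_derivative (\<lambda>h. snd (G' h))) (at (F (W0, J)))"
  proof (rule has_derivative_snd,
      rule has_derivative_inverse_strong[where S = "{W. qinvertible W} \<times> UNIV" and x = "(W0, J)"])
    show "open ({W. qinvertible W} \<times> UNIV)"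
      by (intro open_Times open_qinvertible open_UNIV)
    show "(W0, J) \<in> {W. qinvertible W} \<times> UNIV"
      using W0 by simp
    show "continuous_on ({W. qinvertible W} \<times> UNIV) F"
      by (intro continuous_at_imp_continuous_on ballI has_derivative_continuous[OF F_deriv])
    show "G (F p) = p" if "p \<in> {W. qinvertible W} \<times> UNIV" for p
      using that by (auto simp: F_def G_def qmat_mul_assoc[symmetric] qmat_mul_qinv_left)
    show "(F has_derivative (\<lambda>h. (fst h, W0 \<star> snd h + fst h \<star> J))) (at (W0, J))"
      using F_deriv[of "(W0, J)"] by simp
    show "(\<lambda>h. (fst h, W0 \<star> snd h + fst h \<star> J)) \<circ> G' = id"
      using W0 by (auto simp: G'_def J_def qmat_mul.diff_right qmat_mul_assoc[symmetric]
          qmat_mul_qinv_right)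
  qed
  then have "((\<lambda>W. snd (G (W, qmat_id))) has_derivative (\<lambda>h. snd (G' (h, 0)))) (at W0)"
    using has_derivative_compose[of "\<lambda>W. (W, qmat_id)" "\<lambda>h. (h, 0)"]
    by (simp add: F_def J_def qmat_mul_qinv_right W0 has_derivative_Pair)
  then show ?thesis
    by (simp add: G_def G'_def J_def qmat_mul.zero_left qmat_mul.minus_right qmat_mul_assoc)
qed

lemma has_derivative_blinfun_componentwise:
  fixes F F' :: "'a::euclidean_space \<Rightarrow> 'c::euclidean_space \<Rightarrow>\<^sub>L 'd::real_normed_vector"
  assumes deriv: "\<And>b. b \<in> Basis \<Longrightarrow> ((\<lambda>y. F y b) has_derivative (\<lambda>k. F' k b)) (at x)"
  shows "(F has_derivative F') (at x)"
proof -
  have "linear F'"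
  proof (rule linearI)
    fix k l :: 'a and c :: real
    show "F' (k + l) = F' k + F' l"
      by (rule blinfun_euclidean_eqI)
        (simp add: blinfun.add_left linear_add[OF has_derivative_linear[OF deriv]])
    show "F' (c *\<^sub>R k) = c *\<^sub>R F' k"
      by (rule blinfun_euclidean_eqI)
        (simp add: blinfun.scaleR_left linear_scale[OF has_derivative_linear[OF deriv]])
  qed
  then have "bounded_linear F'"
    by (simp add: linear_conv_bounded_linear)
  moreover have "((\<lambda>y. (F y - F x - F' (y - x)) /\<^sub>R norm (y - x)) \<longlongrightarrow> 0) (at x)"
  proof (rule tendsto_componentwise1)
    fix b :: 'c assume "b \<in> Basis"
    then have "((\<lambda>y. (F y b - F x b - F' (y - x) b) /\<^sub>R norm (y - x)) \<longlongrightarrow> 0) (at x)"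
      using deriv unfolding has_derivative_at_within by blast
    then show "((\<lambda>y. ((F y - F x - F' (y - x)) /\<^sub>R norm (y - x)) b) \<longlongrightarrow> blinfun_apply 0 b) (at x)"
      by (simp add: blinfun.diff_left blinfun.scaleR_left)
  qed
  ultimately show ?thesis
    unfolding has_derivative_at_within by blast
qed

lemma sum_Basis_prod:
  fixes f :: "'a::euclidean_space \<times> 'b::euclidean_space \<Rightarrow> 'c::comm_monoid_add"
  shows "sum f Basis = (\<Sum>i\<in>Basis. f (i, 0)) + (\<Sum>i\<in>Basis. f (0, i))"
proof -
  have "inj_on (\<lambda>u. (u::'a, 0::'b)) Basis" "inj_on (\<lambda>u. (0::'a, u::'b)) Basis"
    by (auto intro!: inj_onI)
  then show ?thesis
    unfolding Basis_prod_def
    by (subst sum.union_disjoint) (auto simp: Basis_prod_def sum.reindex)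
qed

definition qdiff :: "('p::finite,'r::finite) qblock \<Rightarrow> quat^'p^'p" where
  "qdiff Q = fst Q - fst (snd Q)"

lemma bounded_linear_qdiff: "bounded_linear qdiff"
  unfolding linear_conv_bounded_linear[symmetric] qdiff_def
  by (rule linearI) (auto simp: algebra_simps)

lemma Phi_eq: "Phi Q = snd (snd Q) \<star> qinv (qdiff Q)"
  by (cases Q) (simp add: Phi_def qdiff_def)

definition Phi_deriv :: "('p::finite,'r::finite) qblock \<Rightarrow> ('p,'r) qblock \<Rightarrow> quat^'p^'r" where
  "Phi_deriv Q h = (let J = qinv (qdiff Q) in snd (snd h) \<star> J - snd (snd Q) \<star> (J \<star> qdiff h \<star> J))"

definition Phi_deriv2 ::
  "('p::finite,'r::finite) qblock \<Rightarrow> ('p,'r) qblock \<Rightarrow> ('p,'r) qblock \<Rightarrow> quat^'p^'r" where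
  "Phi_deriv2 Q k h = (let J = qinv (qdiff Q) in
     snd (snd Q) \<star> (J \<star> qdiff k \<star> J \<star> qdiff h \<star> J + J \<star> qdiff h \<star> J \<star> qdiff k \<star> J)
     - snd (snd h) \<star> (J \<star> qdiff k \<star> J) - snd (snd k) \<star> (J \<star> qdiff h \<star> J))"

lemmas qdiff_linear_simps = linear_add[OF bounded_linear.linear[OF bounded_linear_qdiff]]
  linear_scale[OF bounded_linear.linear[OF bounded_linear_qdiff]]

lemma bounded_linear_Phi_deriv: "bounded_linear (Phi_deriv Q)"
  unfolding linear_conv_bounded_linear[symmetric] Phi_deriv_def Let_def
  by (rule linearI) (auto simp: qdiff_linear_simps qmat_mul.add_left qmat_mul.add_right
      qmat_mul.scaleR_left qmat_mul.scaleR_right algebra_simps)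

lemma bounded_linear_Phi_deriv2: "bounded_linear (Phi_deriv2 Q k)"
  unfolding linear_conv_bounded_linear[symmetric] Phi_deriv2_def Let_def
  by (rule linearI) (auto simp: qdiff_linear_simps qmat_mul.add_left qmat_mul.add_right
      qmat_mul.scaleR_left qmat_mul.scaleR_right algebra_simps)

lemma has_derivative_qinv_qdiff:
  assumes "qinvertible (qdiff Q)"
  shows "((\<lambda>y. qinv (qdiff y)) has_derivative
      (\<lambda>k. - (qinv (qdiff Q) \<star> qdiff k \<star> qinv (qdiff Q)))) (at Q)"
  using has_derivative_compose[OF bounded_linear_imp_has_derivative[OF bounded_linear_qdiff]
      has_derivative_qinv[OF assms]] .

lemma has_derivative_Phi:
  assumes "qinvertible (qdiff Q)"
  shows "(Phi has_derivative Phi_deriv Q) (at Q)"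
proof -
  have "((\<lambda>y. snd (snd y) \<star> qinv (qdiff y)) has_derivative Phi_deriv Q) (at Q)"
    by (rule has_derivative_eq_rhs[OF qmat_mul.FDERIV[OF
          has_derivative_snd[OF has_derivative_snd[OF has_derivative_ident]]
          has_derivative_qinv_qdiff[OF assms]]])
      (simp add: fun_eq_iff Phi_deriv_def Let_def qmat_mul.minus_right qmat_mul_assoc)
  then show ?thesis
    by (simp add: Phi_eq[abs_def])
qed

lemma has_derivative_Phi_deriv:
  assumes "qinvertible (qdiff Q)"
  shows "((\<lambda>y. Phi_deriv y h) has_derivative (\<lambda>k. Phi_deriv2 Q k h)) (at Q)"
  unfolding Phi_deriv_def Let_def
  by (rule has_derivative_eq_rhs[OF has_derivative_diff[OF
        qmat_mul.FDERIV[OF has_derivative_const has_derivative_qinv_qdiff[OF assms]]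
        qmat_mul.FDERIV[OF has_derivative_snd[OF has_derivative_snd[OF has_derivative_ident]]
          qmat_mul.FDERIV[OF qmat_mul.FDERIV[OF has_derivative_qinv_qdiff[OF assms]
            has_derivative_const] has_derivative_qinv_qdiff[OF assms]]]]])
    (simp add: fun_eq_iff Phi_deriv2_def Let_def qmat_mul.zero_left qmat_mul.zero_right
      qmat_mul.diff_left qmat_mul.diff_right qmat_mul.add_left qmat_mul.add_right
      qmat_mul.minus_left qmat_mul.minus_right qmat_mul_assoc algebra_simps)

lemma Phi_laplacian_eq_0:
  fixes Q :: "('p::finite,'r::finite) qblock"
  shows "(\<Sum>b\<in>Basis. usig b *\<^sub>R Phi_deriv2 Q b b) = 0"
proof -
  have Q0_sign: "usig (i, 0) = -1" if "i \<in> Basis" for i :: "quat^'p^'p"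
    using that nonzero_Basis by (force simp: usig_def)
  have Q1_dir: "Phi_deriv2 Q (0, j, 0) (0, j, 0) = Phi_deriv2 Q (j, 0) (j, 0)" for j
    by (simp add: Phi_deriv2_def Let_def qdiff_def qmat_mul.zero_left qmat_mul.minus_left
        qmat_mul.minus_right)
  have Q2_dir: "Phi_deriv2 Q (0, 0, c) (0, 0, c) = 0" for c
    by (simp add: Phi_deriv2_def Let_def qdiff_def qmat_mul.zero_left qmat_mul.zero_right)
  have Q0_part: "(\<Sum>i\<in>Basis. usig (i, 0) *\<^sub>R Phi_deriv2 Q (i, 0) (i, 0))
      = - (\<Sum>i\<in>Basis. Phi_deriv2 Q (i, 0) (i, 0))"
    by (simp add: Q0_sign sum_negf[symmetric])
  have Q12_sign: "usig (0, v) = 1" for v :: "(quat^'p^'p) \<times> (quat^'p^'r)"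
    by (simp add: usig_def)
  show ?thesis
    by (simp add: sum_Basis_prod Q0_part Q12_sign Q1_dir Q2_dir)
qed

lemma semi_harmonic_on_Phi: "semi_harmonic_on usig Upq Phi"
  unfolding semi_harmonic_on_def
proof (intro exI ballI conjI)
  fix Q :: "('p::finite,'r::finite) qblock" assume "Q \<in> Upq"
  then have Q: "qinvertible (qdiff Q)"
    by (cases Q) (simp add: qdiff_def qinvertible_diff_if_Upq)
  show "(Phi has_derivative blinfun_apply (Blinfun (Phi_deriv Q))) (at Q)"
    by (simp add: bounded_linear_Blinfun_apply bounded_linear_Phi_deriv has_derivative_Phi[OF Q])
  show "((\<lambda>y. Blinfun (Phi_deriv y)) has_derivative (\<lambda>k. Blinfun (Phi_deriv2 Q k))) (at Q)"
    by (rule has_derivative_blinfun_componentwise)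
      (simp add: bounded_linear_Blinfun_apply bounded_linear_Phi_deriv bounded_linear_Phi_deriv2
        has_derivative_Phi_deriv[OF Q])
  show "(\<Sum>b\<in>Basis. usig b *\<^sub>R blinfun_apply (Blinfun (Phi_deriv2 Q b)) b) = 0"
    by (simp add: bounded_linear_Blinfun_apply bounded_linear_Phi_deriv2 Phi_laplacian_eq_0)
qed

theorem lemma6p1:
  shows "(\<forall>Q\<in>(Upq :: ('p::finite,'r::finite) qblock set). \<forall>g::quat^'p^'p.
            qinvertible g \<longrightarrow> Phi (gact Q g) = Phi Q)
         \<and> semi_harmonic_on usig (Upq :: ('p,'r) qblock set) Phi"
  using Phi_gact semi_harmonic_on_Phi by blast

end
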